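(* Let $S,T,V$ be ordered trees and let $g\colon V\to T$ and $f\colon T\to S$ be rigid surjections. Let $x$ be a leaf of $S$ and let $y$ be the leaf of $T$ that is $f$-conjugate to $x$. Then \[ f_x\circ g_y=(f\circ g)_x. \]
   Context: A tree is a finite, non-empty poset $(T,\sqsubseteq_T)$ with a smallest element (root) in which the predecessors of each element form a chain (each element is its own predecessor); $v\wedge_T w$ is the largest common predecessor. An ordered tree has a fixed linear order on the immediate successors of each node, inducing the lexicographic linear order $\leq_T$: $v\leq_T w$ if $v\sqsubseteq_T w$, and for incomparable $v,w$, $v\leq_T w$ iff the immediate successor of $v\wedge_T w$ below $v$ precedes the one below $w$. A morphism preserves $\wedge$, is $\leq$-monotone and maps root to root; an embedding is an injective morphism. A function $f\colon T\to S$ is a rigid surjection if there is a morphism $e\colon S\to T$ (unique, called the injection of $f$) with $f\circ e={\rm id}_S$ and $e(f(w))\sqsubseteq_T w$ for all $w$. For $v\in T$, $T^v=\{w\in T\mid w\leq_T v\}$. A leaf is a $\sqsubseteq$-maximal node. For an embedding $i\colon S\to T$, a leaf $y$ of $T$ is $i$-conjugate to a leaf $x$ of $S$ if: (i) when $x$ is the $\leq_S$-largest leaf of $S$, $y$ is the $\leq_T$-largest leaf of $T$; (ii) otherwise, with $x'$ the $\leq_S$-smallest leaf with $x<_S x'$, $y$ is the $\leq_T$-largest leaf with $y<_T i(x')$ and $i(x)\wedge_T i(x')=y\wedge_T i(x')$. A leaf $y$ of $T$ is $f$-conjugate to the leaf $x$ of $S$ if it is $i$-conjugate to $x$ for $i$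 the injection of $f$, and then $f_x:=f\upharpoonright T^y$. Similarly $g_y=g\upharpoonright V^z$ with $z$ the leaf of $V$ that is $g$-conjugate to $y$, and $(f\circ g)_x$ is defined using the rigid surjection $f\circ g$. *)

theory Defs
  imports Main
begin

text \<open>An ordered tree: a node set, the tree order (sqsubseteq) and, for each node,
  a linear order on its immediate successors (the sibling order).\<close>

record 'a otree =
  nodes :: "'a set"
  tle   :: "'a \<Rightarrow> 'a \<Rightarrow> bool"
  sibl  :: "'a \<Rightarrow> 'a \<Rightarrow> bool"

definition tlt :: "'a otree \<Rightarrow> 'a \<Rightarrow> 'a \<Rightarrow> bool" where
  "tlt T v w \<longleftrightarrow> tle T v w \<and> v \<noteq> w"

definition is_tree :: "'a otree \<Rightarrow> bool" where
  "is_tree T \<longleftrightarrow> finite (nodes T) \<and> nodes T \<noteq> {} \<and>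
     (\<forall>v\<in>nodes T. tle T v v) \<and>
     (\<forall>v\<in>nodes T. \<forall>w\<in>nodes T. tle T v w \<and> tle T w v \<longrightarrow> v = w) \<and>
     (\<forall>u\<in>nodes T. \<forall>v\<in>nodes T. \<forall>w\<in>nodes T. tle T u v \<and> tle T v w \<longrightarrow> tle T u w) \<and>
     (\<exists>r\<in>nodes T. \<forall>w\<in>nodes T. tle T r w) \<and>
     (\<forall>v\<in>nodes T. \<forall>u\<in>nodes T. \<forall>w\<in>nodes T.
        tle T u v \<and> tle T w v \<longrightarrow> tle T u w \<or> tle T w u)"

definition immsucc :: "'a otree \<Rightarrow> 'a \<Rightarrow> 'a \<Rightarrow> bool" where
  "immsucc T v w \<longleftrightarrow> v \<in> nodes T \<and> w \<in> nodes T \<and> tlt T v w \<and>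
     \<not> (\<exists>u\<in>nodes T. tlt T v u \<and> tlt T u w)"

definition is_otree :: "'a otree \<Rightarrow> bool" where
  "is_otree T \<longleftrightarrow> is_tree T \<and>
     (\<forall>v\<in>nodes T.
        (\<forall>a. immsucc T v a \<longrightarrow> sibl T a a) \<and>
        (\<forall>a b. immsucc T v a \<and> immsucc T v b \<and> sibl T a b \<and> sibl T b a \<longrightarrow> a = b) \<and>
        (\<forall>a b c. immsucc T v a \<and> immsucc T v b \<and> immsucc T v c \<and> sibl T a b \<and> sibl T b c
            \<longrightarrow> sibl T a c) \<and>
        (\<forall>a b. immsucc T v a \<and> immsucc T v b \<longrightarrow> sibl T a b \<or> sibl T b a))"

definition root :: "'a otree \<Rightarrow> 'a" where
  "root T = (THE r. r \<in> nodes T \<and> (\<forall>w\<in>nodes T. tle T r w))"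

definition meet :: "'a otree \<Rightarrow> 'a \<Rightarrow> 'a \<Rightarrow> 'a" where
  "meet T v w = (THE m. m \<in> nodes T \<and> tle T m v \<and> tle T m w \<and>
       (\<forall>u\<in>nodes T. tle T u v \<and> tle T u w \<longrightarrow> tle T u m))"

definition child_toward :: "'a otree \<Rightarrow> 'a \<Rightarrow> 'a \<Rightarrow> 'a" where
  "child_toward T m v = (THE c. immsucc T m c \<and> tle T c v)"

definition lex :: "'a otree \<Rightarrow> 'a \<Rightarrow> 'a \<Rightarrow> bool" where
  "lex T v w \<longleftrightarrow> tle T v w \<or>
     (\<not> tle T v w \<and> \<not> tle T w v \<and>
      sibl T (child_toward T (meet T v w) v) (child_toward T (meet T v w) w))"

definition lexlt :: "'a otree \<Rightarrow> 'a \<Rightarrow> 'a \<Rightarrow> bool" where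
  "lexlt T v w \<longleftrightarrow> lex T v w \<and> v \<noteq> w"

definition morphism :: "'a otree \<Rightarrow> 'b otree \<Rightarrow> ('a \<Rightarrow> 'b) \<Rightarrow> bool" where
  "morphism S T e \<longleftrightarrow> (\<forall>v\<in>nodes S. e v \<in> nodes T) \<and>
     (\<forall>v\<in>nodes S. \<forall>w\<in>nodes S. e (meet S v w) = meet T (e v) (e w)) \<and>
     (\<forall>v\<in>nodes S. \<forall>w\<in>nodes S. lex S v w \<longrightarrow> lex T (e v) (e w)) \<and>
     e (root S) = root T"

definition embedding :: "'a otree \<Rightarrow> 'b otree \<Rightarrow> ('a \<Rightarrow> 'b) \<Rightarrow> bool" where
  "embedding S T e \<longleftrightarrow> morphism S T e \<and> inj_on e (nodes S)"

definition is_injection_of :: "'b otree \<Rightarrow> 'a otree \<Rightarrow> ('b \<Rightarrow> 'a) \<Rightarrow> ('a \<Rightarrow> 'b) \<Rightarrow> bool" where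
  "is_injection_of T S f e \<longleftrightarrow> morphism S T e \<and> (\<forall>v\<in>nodes S. f (e v) = v) \<and>
     (\<forall>w\<in>nodes T. tle T (e (f w)) w)"

definition rigid_surj :: "'b otree \<Rightarrow> 'a otree \<Rightarrow> ('b \<Rightarrow> 'a) \<Rightarrow> bool" where
  "rigid_surj T S f \<longleftrightarrow> (\<forall>w\<in>nodes T. f w \<in> nodes S) \<and> (\<exists>e. is_injection_of T S f e)"

text \<open>the (unique on nodes S) injection of f\<close>
definition injection :: "'b otree \<Rightarrow> 'a otree \<Rightarrow> ('b \<Rightarrow> 'a) \<Rightarrow> ('a \<Rightarrow> 'b)" where
  "injection T S f = (SOME e. is_injection_of T S f e)"

definition leaf :: "'a otree \<Rightarrow> 'a \<Rightarrow> bool" where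
  "leaf T y \<longleftrightarrow> y \<in> nodes T \<and> (\<forall>w\<in>nodes T. tle T y w \<longrightarrow> w = y)"

definition i_conj :: "'a otree \<Rightarrow> 'b otree \<Rightarrow> ('a \<Rightarrow> 'b) \<Rightarrow> 'b \<Rightarrow> 'a \<Rightarrow> bool" where
  "i_conj S T i y x \<longleftrightarrow> leaf T y \<and> leaf S x \<and>
    (if (\<forall>u. leaf S u \<longrightarrow> lex S u x)
     then (\<forall>u. leaf T u \<longrightarrow> lex T u y)
     else (let x' = (THE x'. leaf S x' \<and> lexlt S x x' \<and>
                       (\<forall>u. leaf S u \<and> lexlt S x u \<longrightarrow> lex S x' u)) in
           lexlt T y (i x') \<and> meet T (i x) (i x') = meet T y (i x') \<and>
           (\<forall>u. leaf T u \<and> lexlt T u (i x') \<and> meet T (i x) (i x') = meet T u (i x')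
                 \<longrightarrow> lex T u y)))"

definition f_conj :: "'b otree \<Rightarrow> 'a otree \<Rightarrow> ('b \<Rightarrow> 'a) \<Rightarrow> 'b \<Rightarrow> 'a \<Rightarrow> bool" where
  "f_conj T S f y x \<longleftrightarrow> i_conj S T (injection T S f) y x"

text \<open>T^v = {w. w \<le>_T v}; f_x is f restricted to T^y\<close>
definition down :: "'a otree \<Rightarrow> 'a \<Rightarrow> 'a set" where
  "down T v = {w \<in> nodes T. lex T w v}"

end

theory Submission
  imports Defs
begin

text \<open>Let F, G be the injections of f and g; the injection of f \<circ> g agrees with G \<circ> F.
  If x is the last leaf, so are its conjugates and there is nothing to prove. Otherwise let x' be
  the next leaf, m = F x \<and> F x' and b the immediate successor of m below F x'. The leaf y
  conjugate to x is the last leaf above a left sibling of b; its next leaf y' lies above b, so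
  y \<and> y' = m. As G preserves meets and the tree order, G y \<and> G y' = G m = G (F x) \<and> G (F x'), and
  both G y' and G (F x') lie above the immediate successor c of G m below G b. Hence the
  g-conjugate of y and the (f \<circ> g)-conjugate of x are the same leaf z, the last leaf above a left
  sibling of c. Finally, writing \<le> for the lexicographic and \<sqsubseteq> for the tree order, if w \<le> z
  but not g w \<le> y, then b \<le> g w, whence G b \<le> G (g w) \<sqsubseteq> w \<le> z < G b.\<close>

lemma finite_total_has_greatest:
  assumes "finite A" "A \<noteq> {}"
    and total: "\<And>a b. \<lbrakk>a \<in> A; b \<in> A\<rbrakk> \<Longrightarrow> R a b \<or> R b a"
    and trans: "\<And>a b c. \<lbrakk>a \<in> A; b \<in> A; c \<in> A; R a b; R b c\<rbrakk> \<Longrightarrow> R a c"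
  shows "\<exists>m\<in>A. \<forall>a\<in>A. R a m"
  using assms(1,2) total trans
proof (induction A rule: finite_ne_induct)
  case (singleton x)
  then show ?case by blast
next
  case (insert x F)
  obtain m where m: "m \<in> F" "\<forall>a\<in>F. R a m"
    using insert.IH insert.prems by blast
  show ?case
  proof (cases "R x m")
    case True
    with m show ?thesis by blast
  next
    case False
    then have "R m x" "R x x"
      using insert.prems(1) m(1) by blast+
    then have "\<forall>a\<in>insert x F. R a x"
      using m insert.prems(2) by blast
    then show ?thesis by blast
  qed
qed

definition left_split :: "'a otree \<Rightarrow> 'a \<Rightarrow> 'a \<Rightarrow> bool" where
  "left_split T u v \<longleftrightarrow>
     (\<exists>m a b. immsucc T m a \<and> immsucc T m b \<and> a \<noteq> b \<and> sibl T a b \<and> tle T a u \<and> tle T b v)"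

locale tree =
  fixes T :: "'a otree"
  assumes is_tree: "is_tree T"
begin

lemma finite_nodes: "finite (nodes T)"
  using is_tree unfolding is_tree_def by blast

lemma tle_refl: "v \<in> nodes T \<Longrightarrow> tle T v v"
  using is_tree unfolding is_tree_def by blast

lemma tle_antisym: "\<lbrakk>v \<in> nodes T; w \<in> nodes T; tle T v w; tle T w v\<rbrakk> \<Longrightarrow> v = w"
  using is_tree unfolding is_tree_def by blast

lemma tle_trans:
  "\<lbrakk>u \<in> nodes T; v \<in> nodes T; w \<in> nodes T; tle T u v; tle T v w\<rbrakk> \<Longrightarrow> tle T u w"
  using is_tree unfolding is_tree_def by blast

lemma root_exists: "\<exists>r\<in>nodes T. \<forall>w\<in>nodes T. tle T r w"
  using is_tree unfolding is_tree_def by blast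

lemma predecessors_linear:
  "\<lbrakk>v \<in> nodes T; u \<in> nodes T; w \<in> nodes T; tle T u v; tle T w v\<rbrakk> \<Longrightarrow> tle T u w \<or> tle T w u"
  using is_tree unfolding is_tree_def by blast

lemma tlt_trans:
  assumes "u \<in> nodes T" "v \<in> nodes T" "w \<in> nodes T" "tlt T u v" "tlt T v w"
  shows "tlt T u w"
proof -
  have "tle T u w" using assms tle_trans unfolding tlt_def by blast
  moreover have "u \<noteq> w" using assms tle_antisym unfolding tlt_def by blast
  ultimately show ?thesis unfolding tlt_def by simp
qed

lemma tlt_asymp_on: "A \<subseteq> nodes T \<Longrightarrow> asymp_on A (tlt T)"
  by (rule asymp_onI) (use tle_antisym in \<open>auto simp: tlt_def\<close>)

lemma tlt_transp_on: "A \<subseteq> nodes T \<Longrightarrow> transp_on A (tlt T)"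
  by (rule transp_onI) (use tlt_trans in blast)

lemma finite_has_tlt_maximal:
  assumes "A \<subseteq> nodes T" "A \<noteq> {}"
  shows "\<exists>m\<in>A. \<forall>a\<in>A. \<not> tlt T m a"
proof -
  have "\<exists>m\<in>A. \<forall>a\<in>A. a \<noteq> m \<longrightarrow> \<not> tlt T m a"
    using finite_subset[OF assms(1) finite_nodes] tlt_asymp_on[OF assms(1)]
      tlt_transp_on[OF assms(1)]
    by (rule Finite_Set.bex_max_element) (rule assms(2))
  then show ?thesis by (auto simp: tlt_def)
qed

lemma finite_has_tlt_minimal:
  assumes "A \<subseteq> nodes T" "A \<noteq> {}"
  shows "\<exists>m\<in>A. \<forall>a\<in>A. \<not> tlt T a m"
proof -
  have "\<exists>m\<in>A. \<forall>a\<in>A. a \<noteq> m \<longrightarrow> \<not> tlt T a m"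
    using finite_subset[OF assms(1) finite_nodes] tlt_asymp_on[OF assms(1)]
      tlt_transp_on[OF assms(1)]
    by (rule Finite_Set.bex_min_element) (rule assms(2))
  then show ?thesis by (auto simp: tlt_def)
qed

lemma meet_exists:
  assumes "u \<in> nodes T" "v \<in> nodes T"
  shows "\<exists>m\<in>nodes T. tle T m u \<and> tle T m v \<and> (\<forall>p\<in>nodes T. tle T p u \<and> tle T p v \<longrightarrow> tle T p m)"
proof -
  let ?A = "{p\<in>nodes T. tle T p u \<and> tle T p v}"
  have "?A \<noteq> {}"
    using root_exists assms by blast
  then obtain m where m: "m \<in> ?A" "\<forall>p\<in>?A. \<not> tlt T m p"
    using finite_has_tlt_maximal[of ?A] by blast
  have "tle T p m" if "p \<in> ?A" for p
    using that m predecessors_linear[of u p m] assms unfolding tlt_def by blast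
  with m show ?thesis by blast
qed

lemma
  assumes "u \<in> nodes T" "v \<in> nodes T"
  shows meet_in_nodes: "meet T u v \<in> nodes T"
    and meet_le1: "tle T (meet T u v) u"
    and meet_le2: "tle T (meet T u v) v"
    and meet_greatest: "\<And>p. \<lbrakk>p \<in> nodes T; tle T p u; tle T p v\<rbrakk> \<Longrightarrow> tle T p (meet T u v)"
proof -
  obtain m where m: "m \<in> nodes T" "tle T m u" "tle T m v"
    "\<forall>p\<in>nodes T. tle T p u \<and> tle T p v \<longrightarrow> tle T p m"
    using meet_exists[OF assms] by blast
  have "meet T u v = m"
    unfolding meet_def by (rule the_equality) (use m tle_antisym in blast)+
  with m show "meet T u v \<in> nodes T" "tle T (meet T u v) u" "tle T (meet T u v) v"
    "\<And>p. \<lbrakk>p \<in> nodes T; tle T p u; tle T p v\<rbrakk> \<Longrightarrow> tle T p (meet T u v)"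
    by auto
qed

lemma meet_eqI:
  assumes "u \<in> nodes T" "v \<in> nodes T" "m \<in> nodes T" "tle T m u" "tle T m v"
    "\<And>p. \<lbrakk>p \<in> nodes T; tle T p u; tle T p v\<rbrakk> \<Longrightarrow> tle T p m"
  shows "meet T u v = m"
  using assms meet_in_nodes meet_le1 meet_le2 meet_greatest tle_antisym by metis

lemma tle_iff_meet_eq: "\<lbrakk>u \<in> nodes T; v \<in> nodes T\<rbrakk> \<Longrightarrow> tle T u v \<longleftrightarrow> meet T u v = u"
  using meet_eqI[of u v u] meet_le2[of u v] tle_refl by metis

lemma immsuccD:
  "immsucc T m a \<Longrightarrow> m \<in> nodes T \<and> a \<in> nodes T \<and> tle T m a \<and> m \<noteq> a"
  unfolding immsucc_def tlt_def by blast

lemma immsucc_no_between: "\<lbrakk>immsucc T m a; p \<in> nodes T; tlt T m p; tle T p a\<rbrakk> \<Longrightarrow> p = a"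
  unfolding immsucc_def tlt_def by blast

lemma immsucc_le_parent:
  assumes "immsucc T m a" "p \<in> nodes T" "tle T p a" "p \<noteq> a"
  shows "tle T p m"
proof -
  have "tle T p m \<or> tle T m p"
    using predecessors_linear[of a p m] immsuccD[OF assms(1)] assms by blast
  then show ?thesis
    using immsucc_no_between[OF assms(1,2)] assms(3,4) tle_refl[OF assms(2)] unfolding tlt_def by blast
qed

lemma immsucc_tle_of_tlt:
  assumes "immsucc T m c" "q \<in> nodes T" "p \<in> nodes T" "tlt T m q" "tle T c p" "tle T q p"
  shows "tle T c q"
  using predecessors_linear[of p c q] immsuccD[OF assms(1)] assms
    immsucc_no_between[OF assms(1,2,4)] tle_refl[OF assms(2)] by blast

lemma immsucc_unique:
  assumes "immsucc T m a" "immsucc T m b" "p \<in> nodes T" "tle T a p" "tle T b p"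
  shows "a = b"
proof -
  have "tle T a b \<or> tle T b a"
    using predecessors_linear[of p a b] immsuccD[OF assms(1)] immsuccD[OF assms(2)] assms by blast
  then show ?thesis
    using immsucc_no_between immsuccD assms(1,2) unfolding tlt_def by metis
qed

lemma immsucc_exists:
  assumes "m \<in> nodes T" "v \<in> nodes T" "tlt T m v"
  shows "\<exists>c. immsucc T m c \<and> tle T c v"
proof -
  let ?A = "{p\<in>nodes T. tlt T m p \<and> tle T p v}"
  have "?A \<noteq> {}"
    using assms tle_refl by blast
  then obtain c where c: "c \<in> ?A" "\<forall>p\<in>?A. \<not> tlt T p c"
    using finite_has_tlt_minimal[of ?A] by blast
  have "tle T p v" if "p \<in> nodes T" "tle T p c" for p
    using that c tle_trans[of p c v] assms by blast
  with c have "immsucc T m c"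
    unfolding immsucc_def tlt_def using assms(1) by blast
  with c show ?thesis by blast
qed

lemma child_toward_eq: "\<lbrakk>immsucc T m c; tle T c v; v \<in> nodes T\<rbrakk> \<Longrightarrow> child_toward T m v = c"
  unfolding child_toward_def by (rule the_equality) (use immsucc_unique in blast)+

lemma meet_distinct_immsucc:
  assumes "immsucc T m a" "immsucc T m b" "a \<noteq> b" "tle T a u" "tle T b v"
    "u \<in> nodes T" "v \<in> nodes T"
  shows "meet T u v = m" "\<not> tle T u v" "\<not> tle T v u"
proof -
  have m: "m \<in> nodes T" "tle T m a" "tle T m b" "a \<in> nodes T" "b \<in> nodes T"
    using immsuccD assms(1,2) by blast+
  have av: "\<not> tle T a v" and bu: "\<not> tle T b u"
    using immsucc_unique[OF assms(1,2)] assms(3-7) by blast+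
  show "\<not> tle T u v"
    using av tle_trans[of a u v] assms m by blast
  show "\<not> tle T v u"
    using bu tle_trans[of b v u] assms m by blast
  show "meet T u v = m"
  proof (rule meet_eqI)
    show "tle T m u" "tle T m v"
      using m assms tle_trans by blast+
    fix p assume p: "p \<in> nodes T" "tle T p u" "tle T p v"
    have "tle T p a \<or> tle T a p"
      using predecessors_linear[of u p a] p assms m by blast
    moreover have "\<not> tle T a p"
      using av tle_trans[of a p v] p assms m by blast
    ultimately show "tle T p m"
      using immsucc_le_parent[OF assms(1) p(1)] tle_refl[OF p(1)] by blast
  qed (use assms m in auto)
qed

lemma left_split_incomparable:
  "\<lbrakk>left_split T u v; u \<in> nodes T; v \<in> nodes T\<rbrakk> \<Longrightarrow> \<not> tle T u v \<and> \<not> tle T v u"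
  unfolding left_split_def using meet_distinct_immsucc(2,3) by metis

lemma incomparable_immsucc:
  assumes "u \<in> nodes T" "v \<in> nodes T" "\<not> tle T u v" "\<not> tle T v u"
  obtains c d where "immsucc T (meet T u v) c" "immsucc T (meet T u v) d" "c \<noteq> d"
    "tle T c u" "tle T d v"
proof -
  let ?m = "meet T u v"
  have "tlt T ?m u" "tlt T ?m v"
    using assms meet_le1 meet_le2 unfolding tlt_def by metis+
  then obtain c d where cd: "immsucc T ?m c" "tle T c u" "immsucc T ?m d" "tle T d v"
    using immsucc_exists meet_in_nodes assms(1,2) by metis
  have "c \<noteq> d"
  proof
    assume "c = d"
    then have "tle T c ?m"
      using meet_greatest assms cd immsuccD by blast
    then show False
      using cd(1) immsuccD tle_antisym by blast
  qed
  with cd that show ?thesis by blast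
qed

lemma lex_iff_left_split:
  assumes "u \<in> nodes T" "v \<in> nodes T"
  shows "lex T u v \<longleftrightarrow> tle T u v \<or> left_split T u v"
proof (cases "tle T u v \<or> tle T v u")
  case True
  then show ?thesis
    using left_split_incomparable[OF _ assms] unfolding lex_def by blast
next
  case False
  let ?m = "meet T u v"
  obtain c d where cd: "immsucc T ?m c" "immsucc T ?m d" "c \<noteq> d" "tle T c u" "tle T d v"
    using incomparable_immsucc assms False by blast
  have ct: "child_toward T ?m u = c" "child_toward T ?m v = d"
    using child_toward_eq cd assms by blast+
  have "left_split T u v \<longleftrightarrow> sibl T c d"
  proof
    assume "left_split T u v"
    then obtain m a b where w: "immsucc T m a" "immsucc T m b" "a \<noteq> b" "sibl T a b"
      "tle T a u" "tle T b v"
      unfolding left_split_def by blast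
    have "m = ?m"
      using meet_distinct_immsucc(1)[OF w(1,2,3,5,6) assms] by simp
    then have "a = c" "b = d"
      using immsucc_unique w cd assms by metis+
    then show "sibl T c d" using w(4) by simp
  next
    assume "sibl T c d"
    then show "left_split T u v"
      unfolding left_split_def using cd by blast
  qed
  then show ?thesis
    using False ct unfolding lex_def by simp
qed

lemma leaf_in_nodes: "leaf T l \<Longrightarrow> l \<in> nodes T"
  unfolding leaf_def by blast

lemma leaf_tle_eq: "\<lbrakk>leaf T l; w \<in> nodes T; tle T l w\<rbrakk> \<Longrightarrow> w = l"
  unfolding leaf_def by blast

lemma finite_leaves: "finite {l. leaf T l}"
  using finite_subset[OF _ finite_nodes] leaf_in_nodes by blast

lemma leaf_above:
  assumes "v \<in> nodes T"
  obtains l where "leaf T l" "tle T v l"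
proof -
  let ?A = "{w\<in>nodes T. tle T v w}"
  obtain m where m: "m \<in> ?A" "\<forall>w\<in>?A. \<not> tlt T m w"
    using finite_has_tlt_maximal[of ?A] assms tle_refl by blast
  have "leaf T m"
    unfolding leaf_def
  proof (intro conjI ballI impI)
    show "m \<in> nodes T" using m by blast
    fix w assume "w \<in> nodes T" "tle T m w"
    then show "w = m"
      using m tle_trans[of v m w] assms unfolding tlt_def by blast
  qed
  with m that show ?thesis by blast
qed

end

definition last_leaf :: "'a otree \<Rightarrow> 'a \<Rightarrow> bool" where
  "last_leaf T y \<longleftrightarrow> leaf T y \<and> (\<forall>u. leaf T u \<longrightarrow> lex T u y)"

definition next_leaf :: "'a otree \<Rightarrow> 'a \<Rightarrow> 'a \<Rightarrow> bool" where
  "next_leaf T x x' \<longleftrightarrow> leaf T x' \<and> lexlt T x x' \<and> (\<forall>u. leaf T u \<and> lexlt T x u \<longrightarrow> lex T x' u)"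

definition left_of_sibling :: "'a otree \<Rightarrow> 'a \<Rightarrow> 'a \<Rightarrow> 'a \<Rightarrow> bool" where
  "left_of_sibling T n b u \<longleftrightarrow> (\<exists>a. immsucc T n a \<and> a \<noteq> b \<and> sibl T a b \<and> tle T a u)"

text \<open>If x' is the leaf after x, m = i x \<and> i x' and b is the immediate successor of m below
  i x', then the leaf i-conjugate to x is the last leaf above a left sibling of b
  (see i_conj_next_leaf_iff).\<close>

definition last_leaf_left_of :: "'a otree \<Rightarrow> 'a \<Rightarrow> 'a \<Rightarrow> 'a \<Rightarrow> bool" where
  "last_leaf_left_of T n b y \<longleftrightarrow> leaf T y \<and> left_of_sibling T n b y \<and>
     (\<forall>u. leaf T u \<and> left_of_sibling T n b u \<longrightarrow> lex T u y)"

locale ordered_tree = tree +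
  assumes is_otree: "is_otree T"
begin

lemma sibl_total: "\<lbrakk>immsucc T m a; immsucc T m b\<rbrakk> \<Longrightarrow> sibl T a b \<or> sibl T b a"
  using is_otree immsuccD unfolding is_otree_def by blast

lemma sibl_antisym: "\<lbrakk>immsucc T m a; immsucc T m b; sibl T a b; sibl T b a\<rbrakk> \<Longrightarrow> a = b"
  using is_otree immsuccD unfolding is_otree_def by blast

lemma sibl_trans:
  "\<lbrakk>immsucc T m a; immsucc T m b; immsucc T m c; sibl T a b; sibl T b c\<rbrakk> \<Longrightarrow> sibl T a c"
  using is_otree immsuccD unfolding is_otree_def by blast

lemma tle_left_split_trans:
  assumes "u \<in> nodes T" "v \<in> nodes T" "w \<in> nodes T" "tle T u v" "left_split T v w"
  shows "tle T u w \<or> left_split T u w"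
proof -
  obtain n c d where w: "immsucc T n c" "immsucc T n d" "c \<noteq> d" "sibl T c d"
    "tle T c v" "tle T d w"
    using assms(5) unfolding left_split_def by blast
  note c = immsuccD[OF w(1)] and d = immsuccD[OF w(2)]
  consider "tle T c u" | "u = c" | "tle T u c" "u \<noteq> c"
    using predecessors_linear[of v u c] assms c w by blast
  then show ?thesis
  proof cases
    case 3
    then have "tle T u n"
      using immsucc_le_parent[OF w(1) assms(1)] by blast
    then show ?thesis
      using tle_trans[of u n d] tle_trans[of u d w] assms c d w by blast
  qed (use w tle_refl[OF assms(1)] in \<open>unfold left_split_def, blast+\<close>)
qed

lemma left_split_tle_trans:
  "\<lbrakk>left_split T u v; v \<in> nodes T; w \<in> nodes T; tle T v w\<rbrakk> \<Longrightarrow> left_split T u w"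
  unfolding left_split_def using immsuccD tle_trans by meson

lemma left_split_trans:
  assumes "u \<in> nodes T" "v \<in> nodes T" "w \<in> nodes T" "left_split T u v" "left_split T v w"
  shows "left_split T u w"
proof -
  obtain m a b where ab: "immsucc T m a" "immsucc T m b" "a \<noteq> b" "sibl T a b"
    "tle T a u" "tle T b v"
    using assms(4) unfolding left_split_def by blast
  obtain n c d where cd: "immsucc T n c" "immsucc T n d" "c \<noteq> d" "sibl T c d"
    "tle T c v" "tle T d w"
    using assms(5) unfolding left_split_def by blast
  note a = immsuccD[OF ab(1)] and b = immsuccD[OF ab(2)]
    and c = immsuccD[OF cd(1)] and d = immsuccD[OF cd(2)]
  have "tle T m v" "tle T n v"
    using tle_trans[of m b v] tle_trans[of n c v] assms(2) a b c ab(6) cd(5) by auto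
  then have "tle T m n \<or> tle T n m"
    using predecessors_linear[of v m n] assms(2) a c by blast
  then consider "m = n" | "tlt T m n" | "tlt T n m"
    unfolding tlt_def by auto
  then show ?thesis
  proof cases
    case 1
    then have "b = c"
      using immsucc_unique[OF ab(2) _ assms(2) ab(6) cd(5)] cd(1) by blast
    have "sibl T a d"
      using sibl_trans[OF ab(1,2)] 1 \<open>b = c\<close> ab(4) cd(2,4) by blast
    moreover have "a \<noteq> d"
      using sibl_antisym[OF ab(1,2) ab(4)] ab(3) cd(4) \<open>b = c\<close> by blast
    ultimately show ?thesis
      unfolding left_split_def using ab(1,5) cd(2,6) 1 by blast
  next
    case 2
    then have "tle T b n"
      using immsucc_tle_of_tlt[OF ab(2) _ assms(2) _ ab(6) \<open>tle T n v\<close>] c by blast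
    then have "tle T b w"
      using tle_trans[of b n d] tle_trans[of b d w] assms(3) b c d cd(6) by blast
    then show ?thesis
      unfolding left_split_def using ab by blast
  next
    case 3
    then have "tle T c m"
      using immsucc_tle_of_tlt[OF cd(1) _ assms(2) _ cd(5) \<open>tle T m v\<close>] a by blast
    then have "tle T c u"
      using tle_trans[of c m a] tle_trans[of c a u] assms(1) a c ab(5) by blast
    then show ?thesis
      unfolding left_split_def using cd by blast
  qed
qed

lemma lex_refl: "u \<in> nodes T \<Longrightarrow> lex T u u"
  unfolding lex_def using tle_refl by blast

lemma tle_imp_lex: "tle T u v \<Longrightarrow> lex T u v"
  unfolding lex_def by blast

lemma lex_trans:
  assumes "u \<in> nodes T" "v \<in> nodes T" "w \<in> nodes T" "lex T u v" "lex T v w"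
  shows "lex T u w"
proof -
  have uv: "tle T u v \<or> left_split T u v" and vw: "tle T v w \<or> left_split T v w"
    using assms lex_iff_left_split by blast+
  have "tle T u w \<or> left_split T u w"
  proof (cases "tle T u v")
    case True
    then show ?thesis
      using vw tle_trans[OF assms(1-3)] tle_left_split_trans[OF assms(1-3)] by blast
  next
    case False
    then show ?thesis
      using uv vw left_split_tle_trans[of u v w] left_split_trans[OF assms(1-3)] assms(2,3)
      by blast
  qed
  then show ?thesis
    using lex_iff_left_split[OF assms(1,3)] by blast
qed

lemma lex_antisym:
  assumes "u \<in> nodes T" "v \<in> nodes T" "lex T u v" "lex T v u"
  shows "u = v"
proof -
  have "\<not> left_split T u u"
    using left_split_incomparable tle_refl assms(1) by blast
  then have "\<not> (left_split T u v \<and> left_split T v u)"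
    using left_split_trans[OF assms(1,2,1)] by blast
  then show ?thesis
    using assms tle_antisym left_split_incomparable
    unfolding lex_iff_left_split[OF assms(1,2)] lex_iff_left_split[OF assms(2,1)]
    by blast
qed

lemma lex_total:
  assumes "u \<in> nodes T" "v \<in> nodes T"
  shows "lex T u v \<or> lex T v u"
proof (cases "tle T u v \<or> tle T v u")
  case False
  then obtain c d where "immsucc T (meet T u v) c" "immsucc T (meet T u v) d" "c \<noteq> d"
    "tle T c u" "tle T d v"
    using incomparable_immsucc assms by blast
  then have "left_split T u v \<or> left_split T v u"
    using sibl_total unfolding left_split_def by blast
  then show ?thesis
    using lex_iff_left_split assms by blast
qed (use tle_imp_lex in blast)

lemma left_split_imp_lexlt:
  assumes "left_split T u v" "u \<in> nodes T" "v \<in> nodes T"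
  shows "lexlt T u v"
  using assms lex_iff_left_split left_split_incomparable tle_refl unfolding lexlt_def by metis

lemma left_split_above_left:
  "\<lbrakk>left_split T u v; u \<in> nodes T; w \<in> nodes T; tle T u w\<rbrakk> \<Longrightarrow> left_split T w v"
  unfolding left_split_def using immsuccD tle_trans by meson

lemma finite_has_lex_greatest:
  assumes "finite A" "A \<subseteq> nodes T" "A \<noteq> {}"
  shows "\<exists>m\<in>A. \<forall>a\<in>A. lex T a m"
  by (rule finite_total_has_greatest[OF assms(1,3)])
    (use assms(2) lex_total lex_trans in \<open>blast, meson subsetD\<close>)

lemma finite_has_lex_least:
  assumes "finite A" "A \<subseteq> nodes T" "A \<noteq> {}"
  shows "\<exists>m\<in>A. \<forall>a\<in>A. lex T m a"
  by (rule finite_total_has_greatest[OF assms(1,3), of "\<lambda>a b. lex T b a"])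
    (use assms(2) lex_total lex_trans in \<open>blast, meson subsetD\<close>)

lemma last_leaf_exists: "\<exists>y. last_leaf T y"
proof -
  obtain r where "r \<in> nodes T" using root_exists by blast
  then obtain l where "leaf T l" using leaf_above by blast
  then obtain m where "leaf T m" "\<forall>u. leaf T u \<longrightarrow> lex T u m"
    using finite_has_lex_greatest[OF finite_leaves] leaf_in_nodes by blast
  then show ?thesis unfolding last_leaf_def by blast
qed

lemma lex_last_leaf: "\<lbrakk>last_leaf T y; v \<in> nodes T\<rbrakk> \<Longrightarrow> lex T v y"
  using leaf_above lex_trans tle_imp_lex leaf_in_nodes unfolding last_leaf_def by metis

lemma last_leaf_unique: "\<lbrakk>last_leaf T y; last_leaf T y'\<rbrakk> \<Longrightarrow> y = y'"
  using lex_antisym leaf_in_nodes unfolding last_leaf_def by blast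

lemma next_leaf_unique:
  assumes "next_leaf T x x'" "next_leaf T x x''"
  shows "x' = x''"
proof -
  have "lex T x' x''" "lex T x'' x'"
    using assms unfolding next_leaf_def by blast+
  then show ?thesis
    using assms lex_antisym leaf_in_nodes unfolding next_leaf_def by blast
qed

lemma next_leaf_exists:
  assumes "leaf T x" "\<not> last_leaf T x"
  obtains x' where "next_leaf T x x'"
proof -
  let ?A = "{u. leaf T u \<and> lexlt T x u}"
  obtain u where u: "leaf T u" "\<not> lex T u x"
    using assms unfolding last_leaf_def by blast
  have "lex T x u" "x \<noteq> u"
    using u lex_total lex_refl assms(1) leaf_in_nodes by blast+
  then have "u \<in> ?A"
    using u(1) unfolding lexlt_def by blast
  moreover have "finite ?A"
    using finite_subset[OF _ finite_leaves] by blast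
  moreover have "?A \<subseteq> nodes T"
    using leaf_in_nodes by blast
  ultimately obtain m where "m \<in> ?A" "\<forall>a\<in>?A. lex T m a"
    using finite_has_lex_least[of ?A] by blast
  then show ?thesis
    using that unfolding next_leaf_def by blast
qed

lemma left_of_sibling_iff:
  assumes "leaf T u" "p \<in> nodes T" "immsucc T n b" "tle T b p"
  shows "lexlt T u p \<and> meet T u p = n \<longleftrightarrow> left_of_sibling T n b u"
proof
  have u: "u \<in> nodes T" using assms(1) leaf_in_nodes by blast
  note nb = immsuccD[OF assms(3)]
  assume lhs: "lexlt T u p \<and> meet T u p = n"
  have "\<not> tle T u p"
  proof
    assume "tle T u p"
    then have "p = u" "meet T u p = p"
      using leaf_tle_eq[OF assms(1,2)] tle_iff_meet_eq[OF u assms(2)] by auto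
    then have "tle T b n"
      using lhs assms(4) by simp
    then show False
      using nb tle_antisym by blast
  qed
  then have "left_split T u p"
    using lhs lex_iff_left_split[OF u assms(2)] unfolding lexlt_def by blast
  then obtain m a b' where w: "immsucc T m a" "immsucc T m b'" "a \<noteq> b'" "sibl T a b'"
    "tle T a u" "tle T b' p"
    unfolding left_split_def by blast
  have "m = n"
    using meet_distinct_immsucc(1)[OF w(1,2,3,5,6) u assms(2)] lhs by simp
  then have "b' = b"
    using immsucc_unique[OF _ assms(3,2) w(6) assms(4)] w(2) by simp
  then show "left_of_sibling T n b u"
    unfolding left_of_sibling_def using w \<open>m = n\<close> by blast
next
  have u: "u \<in> nodes T" using assms(1) leaf_in_nodes by blast
  assume "left_of_sibling T n b u"
  then obtain a where a: "immsucc T n a" "a \<noteq> b" "sibl T a b" "tle T a u"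
    unfolding left_of_sibling_def by blast
  then have "left_split T u p"
    unfolding left_split_def using assms(3,4) by blast
  then show "lexlt T u p \<and> meet T u p = n"
    using left_split_imp_lexlt[OF _ u assms(2)]
      meet_distinct_immsucc(1)[OF a(1) assms(3) a(2,4) assms(4) u assms(2)] by blast
qed

lemma left_split_immsucc_cases:
  assumes "immsucc T n b" "left_split T v b"
  shows "left_split T v n \<or> left_of_sibling T n b v"
proof -
  note nb = immsuccD[OF assms(1)]
  obtain m c d where w: "immsucc T m c" "immsucc T m d" "c \<noteq> d" "sibl T c d"
    "tle T c v" "tle T d b"
    using assms(2) unfolding left_split_def by blast
  note d = immsuccD[OF w(2)]
  have "tle T m b"
    using tle_trans[of m d b] d nb w(6) by blast
  then have "tle T m n \<or> tle T n m"
    using predecessors_linear[of b m n] d nb by blast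
  then consider "m = n" | "tlt T m n" | "tlt T n m"
    unfolding tlt_def by auto
  then show ?thesis
  proof cases
    case 1
    then have "d = b"
      using immsucc_unique[OF _ assms(1) _ w(6)] w(2) nb tle_refl by blast
    then show ?thesis
      unfolding left_of_sibling_def using w 1 by blast
  next
    case 2
    then have "tle T d n"
      using immsucc_tle_of_tlt[OF w(2) _ _ _ w(6)] nb tle_refl by blast
    then show ?thesis
      unfolding left_split_def using w by blast
  next
    case 3
    then have "m = b"
      using immsucc_no_between[OF assms(1) _ _ \<open>tle T m b\<close>] d by blast
    then show ?thesis
      using d w(6) nb tle_antisym by blast
  qed
qed

lemma lexlt_immsucc_cases:
  assumes "immsucc T n b" "v \<in> nodes T" "lexlt T v b"
  shows "lex T v n \<or> left_of_sibling T n b v"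
proof -
  note nb = immsuccD[OF assms(1)]
  have "lex T v b" "v \<noteq> b"
    using assms(3) unfolding lexlt_def by blast+
  then consider "tle T v b" | "left_split T v b"
    using lex_iff_left_split assms(2) nb by blast
  then show ?thesis
  proof cases
    case 1
    then show ?thesis
      using immsucc_le_parent[OF assms(1,2)] \<open>v \<noteq> b\<close> tle_imp_lex by blast
  next
    case 2
    then show ?thesis
      using left_split_immsucc_cases[OF assms(1)] lex_iff_left_split assms(2) nb by blast
  qed
qed

lemma left_of_sibling_above:
  assumes "left_of_sibling T n b v" "v \<in> nodes T" "w \<in> nodes T" "tle T v w"
  shows "left_of_sibling T n b w"
  using assms tle_trans immsuccD unfolding left_of_sibling_def by meson

lemma last_leaf_left_of_exists:
  assumes "left_of_sibling T n b v" "v \<in> nodes T"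
  obtains y where "last_leaf_left_of T n b y"
proof -
  let ?A = "{u. leaf T u \<and> left_of_sibling T n b u}"
  obtain l where "leaf T l" "tle T v l"
    using leaf_above[OF assms(2)] by blast
  then have "l \<in> ?A"
    using left_of_sibling_above[OF assms] leaf_in_nodes by blast
  moreover have "finite ?A" "?A \<subseteq> nodes T"
    using finite_subset[OF _ finite_leaves] leaf_in_nodes by blast+
  ultimately obtain y where "y \<in> ?A" "\<forall>u\<in>?A. lex T u y"
    using finite_has_lex_greatest[of ?A] by blast
  then show ?thesis
    using that unfolding last_leaf_left_of_def by blast
qed

lemma lex_after_last_leaf_left_of:
  assumes "last_leaf_left_of T n b y" "immsucc T n b" "v \<in> nodes T" "\<not> lex T v y"
  shows "lex T b v"
proof (rule ccontr)
  assume "\<not> lex T b v"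
  note nb = immsuccD[OF assms(2)]
  have y: "leaf T y" "y \<in> nodes T" "left_of_sibling T n b y"
    using assms(1) leaf_in_nodes unfolding last_leaf_left_of_def by blast+
  have "lexlt T v b"
    using \<open>\<not> lex T b v\<close> lex_total[OF assms(3)] lex_refl[OF assms(3)] nb unfolding lexlt_def by blast
  then consider "lex T v n" | "left_of_sibling T n b v"
    using lexlt_immsucc_cases[OF assms(2,3)] by blast
  then show False
  proof cases
    case 1
    obtain a where "immsucc T n a" "tle T a y"
      using y(3) unfolding left_of_sibling_def by blast
    then have "tle T n y"
      using tle_trans[of n a y] immsuccD y(2) by blast
    then show False
      using lex_trans[OF assms(3) _ y(2) 1] tle_imp_lex nb assms(4) by blast
  next
    case 2
    obtain l where l: "leaf T l" "tle T v l"
      using leaf_above[OF assms(3)] by blast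
    then have "left_of_sibling T n b l"
      using left_of_sibling_above[OF 2 assms(3)] leaf_in_nodes by blast
    then have "lex T l y"
      using assms(1) l(1) unfolding last_leaf_left_of_def by blast
    then show False
      using lex_trans[OF assms(3) _ y(2)] tle_imp_lex[OF l(2)] leaf_in_nodes[OF l(1)] assms(4)
      by blast
  qed
qed

lemma last_leaf_left_of_next:
  assumes "last_leaf_left_of T n b y" "immsucc T n b"
  obtains y' where "next_leaf T y y'" "tle T b y'" "meet T y y' = n"
proof -
  note nb = immsuccD[OF assms(2)]
  obtain a where a: "immsucc T n a" "a \<noteq> b" "sibl T a b" "tle T a y"
    using assms(1) unfolding last_leaf_left_of_def left_of_sibling_def by blast
  have y: "leaf T y" "y \<in> nodes T"
    using assms(1) leaf_in_nodes unfolding last_leaf_left_of_def by blast+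
  obtain l where l: "leaf T l" "tle T b l"
    using leaf_above nb by blast
  have lN: "l \<in> nodes T"
    using l(1) leaf_in_nodes by blast
  have "left_split T y l"
    unfolding left_split_def using a assms(2) l(2) by blast
  then have yl: "lexlt T y l"
    using left_split_imp_lexlt y(2) lN by blast
  then have "\<not> last_leaf T y"
    using l(1) lex_antisym[OF y(2) lN] unfolding last_leaf_def lexlt_def by blast
  then obtain y' where y': "next_leaf T y y'"
    using next_leaf_exists y(1) by blast
  have y'N: "y' \<in> nodes T" "leaf T y'"
    using y' leaf_in_nodes unfolding next_leaf_def by blast+
  have "\<not> lex T y' y"
    using y' lex_antisym[OF y(2) y'N(1)] unfolding next_leaf_def lexlt_def by blast
  then have "lex T b y'"
    using lex_after_last_leaf_left_of[OF assms y'N(1)] by blast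
  have "tle T b y'"
  proof (rule ccontr)
    assume "\<not> tle T b y'"
    then have "left_split T b y'"
      using \<open>lex T b y'\<close> lex_iff_left_split nb y'N(1) by blast
    then have "lexlt T l y'"
      using left_split_above_left[OF _ _ lN l(2)] left_split_imp_lexlt lN y'N(1) nb by blast
    moreover have "lex T y' l"
      using y' l(1) yl unfolding next_leaf_def by blast
    ultimately show False
      using lex_antisym lN y'N(1) unfolding lexlt_def by blast
  qed
  moreover have "meet T y y' = n"
    using meet_distinct_immsucc(1)[OF a(1) assms(2) a(2,4) \<open>tle T b y'\<close> y(2) y'N(1)] .
  ultimately show ?thesis
    using that y' by blast
qed

end

lemma ordered_treeI: "is_otree T \<Longrightarrow> ordered_tree T"
  unfolding ordered_tree_def ordered_tree_axioms_def tree_def is_otree_def by blast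

lemma morphism_tle:
  assumes "tree S" "tree T" "morphism S T e" "v \<in> nodes S" "w \<in> nodes S" "tle S v w"
  shows "tle T (e v) (e w)"
proof -
  interpret S: tree S by fact
  interpret T: tree T by fact
  have "meet S v w = v"
    using S.tle_iff_meet_eq assms(4-6) by blast
  then have "meet T (e v) (e w) = e v"
    using assms(3-5) unfolding morphism_def by metis
  moreover have "e v \<in> nodes T" "e w \<in> nodes T"
    using assms(3-5) unfolding morphism_def by blast+
  ultimately show ?thesis
    using T.tle_iff_meet_eq by blast
qed

lemma injection_ofD:
  assumes "is_injection_of T S f i"
  shows "morphism S T i"
    and "\<And>v. v \<in> nodes S \<Longrightarrow> i v \<in> nodes T"
    and "\<And>v. v \<in> nodes S \<Longrightarrow> f (i v) = v"
    and "\<And>v w. \<lbrakk>v \<in> nodes S; w \<in> nodes S\<rbrakk> \<Longrightarrow> i (meet S v w) = meet T (i v) (i w)"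
    and "\<And>v w. \<lbrakk>v \<in> nodes S; w \<in> nodes S; lex S v w\<rbrakk> \<Longrightarrow> lex T (i v) (i w)"
    and "\<And>w. w \<in> nodes T \<Longrightarrow> tle T (i (f w)) w"
  using assms unfolding is_injection_of_def morphism_def by auto

lemma injection_of_tle:
  assumes "tree S" "tree T" "is_injection_of T S f i" "v \<in> nodes S" "w \<in> nodes S" "tle S v w"
  shows "tle T (i v) (i w)"
  using morphism_tle[OF assms(1,2) injection_ofD(1)[OF assms(3)] assms(4-6)] .

lemma injection_of_tlt:
  assumes "tree S" "tree T" "is_injection_of T S f i" "v \<in> nodes S" "w \<in> nodes S" "tlt S v w"
  shows "tlt T (i v) (i w)"
  using injection_of_tle[OF assms(1-5)] injection_ofD(3)[OF assms(3)] assms(4-6)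
  unfolding tlt_def by metis

lemma injection_of_unique:
  assumes "tree T" "is_injection_of T S f e" "is_injection_of T S f e'" "v \<in> nodes S"
  shows "e v = e' v"
proof -
  interpret T: tree T by fact
  note e = injection_ofD[OF assms(2)] and e' = injection_ofD[OF assms(3)]
  have "tle T (e v) (e' v)"
    using e(6)[OF e'(2)[OF assms(4)]] e'(3)[OF assms(4)] by simp
  moreover have "tle T (e' v) (e v)"
    using e'(6)[OF e(2)[OF assms(4)]] e(3)[OF assms(4)] by simp
  ultimately show ?thesis
    using T.tle_antisym e(2) e'(2) assms(4) by blast
qed

lemma injection_of_comp:
  assumes "tree T" "tree V" "is_injection_of T S f F" "is_injection_of V T g G"
    "\<And>w. w \<in> nodes T \<Longrightarrow> f w \<in> nodes S" "\<And>w. w \<in> nodes V \<Longrightarrow> g w \<in> nodes T"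
  shows "is_injection_of V S (f \<circ> g) (G \<circ> F)"
proof -
  interpret V: tree V by fact
  note F = injection_ofD[OF assms(3)] and G = injection_ofD[OF assms(4)]
  have "morphism S V (G \<circ> F)"
    using F G assms(3,4) unfolding morphism_def is_injection_of_def by auto
  moreover have "tle V (G (F (f (g w)))) w" if "w \<in> nodes V" for w
  proof -
    have "tle V (G (F (f (g w)))) (G (g w))"
      using injection_of_tle[OF assms(1,2,4)] F(2,6) assms(5,6) that by blast
    then show ?thesis
      using V.tle_trans G(2,6) F(2) assms(5,6) that by blast
  qed
  ultimately show ?thesis
    unfolding is_injection_of_def using F(2,3) G(3) by auto
qed

lemma rigid_surj_injection: "rigid_surj T S f \<Longrightarrow> is_injection_of T S f (injection T S f)"
  unfolding rigid_surj_def injection_def using someI_ex[of "is_injection_of T S f"] by blast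

lemma rigid_surj_comp:
  assumes "tree T" "tree V" "rigid_surj V T g" "rigid_surj T S f"
  shows "rigid_surj V S (f \<circ> g)"
    and "\<And>v. v \<in> nodes S \<Longrightarrow> injection V S (f \<circ> g) v = injection V T g (injection T S f v)"
proof -
  have maps: "\<And>w. w \<in> nodes T \<Longrightarrow> f w \<in> nodes S" "\<And>w. w \<in> nodes V \<Longrightarrow> g w \<in> nodes T"
    using assms(3,4) unfolding rigid_surj_def by blast+
  have comp: "is_injection_of V S (f \<circ> g) (injection V T g \<circ> injection T S f)"
    using injection_of_comp[OF assms(1,2) rigid_surj_injection[OF assms(4)]
        rigid_surj_injection[OF assms(3)] maps] .
  then show rs: "rigid_surj V S (f \<circ> g)"
    unfolding rigid_surj_def using maps by auto
  show "injection V S (f \<circ> g) v = injection V T g (injection T S f v)" if "v \<in> nodes S" for v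
    using injection_of_unique[OF assms(2) rigid_surj_injection[OF rs] comp that] by simp
qed

lemma injection_leaves_incomparable:
  assumes "tree S" "tree T" "is_injection_of T S f i" "leaf S x" "leaf S x'" "x \<noteq> x'"
  shows "\<not> tle T (i x) (i x')"
proof
  interpret S: tree S by fact
  interpret T: tree T by fact
  note I = injection_ofD[OF assms(3)]
  have x: "x \<in> nodes S" "x' \<in> nodes S"
    using assms(4,5) S.leaf_in_nodes by blast+
  assume "tle T (i x) (i x')"
  then have "i (meet S x x') = i x"
    using T.tle_iff_meet_eq I(2,4) x by metis
  then have "meet S x x' = x"
    using I(3) S.meet_in_nodes x by metis
  then have "tle S x x'"
    using S.tle_iff_meet_eq x by blast
  then show False
    using S.leaf_tle_eq[OF assms(4) x(2)] assms(6) by simp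
qed

lemma i_conj_last_leaf:
  "last_leaf S x \<Longrightarrow> i_conj S T i y x \<longleftrightarrow> last_leaf T y"
  unfolding i_conj_def last_leaf_def by simp

lemma i_conj_next_leaf:
  assumes "ordered_tree S" "leaf S x" "next_leaf S x x'"
  shows "i_conj S T i y x \<longleftrightarrow> leaf T y \<and> lexlt T y (i x') \<and> meet T (i x) (i x') = meet T y (i x') \<and>
     (\<forall>u. leaf T u \<and> lexlt T u (i x') \<and> meet T (i x) (i x') = meet T u (i x') \<longrightarrow> lex T u y)"
proof -
  interpret S: ordered_tree S by fact
  have x': "leaf S x'" "lex S x x'" "x \<noteq> x'"
    using assms(3) unfolding next_leaf_def lexlt_def by blast+
  then have "\<not> lex S x' x"
    using S.lex_antisym S.leaf_in_nodes assms(2) by blast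
  then have not_last: "\<not> (\<forall>u. leaf S u \<longrightarrow> lex S u x)"
    using x'(1) by blast
  have "(THE x'. next_leaf S x x') = x'"
    using S.next_leaf_unique[OF _ assms(3)] assms(3) by (rule the_equality[rotated])
  then have "(THE x'. leaf S x' \<and> lexlt S x x' \<and> (\<forall>u. leaf S u \<and> lexlt S x u \<longrightarrow> lex S x' u)) = x'"
    unfolding next_leaf_def .
  then show ?thesis
    unfolding i_conj_def if_not_P[OF not_last] Let_def using assms(2) by simp
qed

lemma i_conj_next_leaf_iff:
  assumes "ordered_tree S" "ordered_tree T" "leaf S x" "next_leaf S x x'" "i x' \<in> nodes T"
    "immsucc T (meet T (i x) (i x')) b" "tle T b (i x')"
  shows "i_conj S T i y x \<longleftrightarrow> last_leaf_left_of T (meet T (i x) (i x')) b y"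
proof -
  interpret T: ordered_tree T by fact
  define P where "P u \<longleftrightarrow> lexlt T u (i x') \<and> meet T (i x) (i x') = meet T u (i x')" for u
  define L where "L = left_of_sibling T (meet T (i x) (i x')) b"
  have eq: "P u \<longleftrightarrow> L u" if "leaf T u" for u
    unfolding P_def L_def using T.left_of_sibling_iff[OF that assms(5-7)] by auto
  have "i_conj S T i y x \<longleftrightarrow> leaf T y \<and> P y \<and> (\<forall>u. leaf T u \<and> P u \<longrightarrow> lex T u y)"
    unfolding i_conj_next_leaf[OF assms(1,3,4)] P_def conj_assoc ..
  also have "\<dots> \<longleftrightarrow> leaf T y \<and> L y \<and> (\<forall>u. leaf T u \<and> L u \<longrightarrow> lex T u y)"
    using eq by blast
  finally show ?thesis
    unfolding last_leaf_left_of_def L_def .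
qed

lemma injection_next_leaf_split:
  assumes "tree S" "tree T" "is_injection_of T S f i" "leaf S x" "next_leaf S x x'"
  shows "left_split T (i x) (i x')"
proof -
  interpret S: tree S by fact
  interpret T: tree T by fact
  note I = injection_ofD[OF assms(3)]
  have x: "x \<in> nodes S" "x' \<in> nodes S" "leaf S x'" "lex S x x'" "x \<noteq> x'"
    using assms(4,5) S.leaf_in_nodes unfolding next_leaf_def lexlt_def by blast+
  then have "lex T (i x) (i x')"
    using I(5) by blast
  moreover have "\<not> tle T (i x) (i x')"
    using injection_leaves_incomparable[OF assms(1-4) x(3,5)] .
  ultimately show ?thesis
    using T.lex_iff_left_split I(2) x(1,2) by blast
qed

lemma i_conj_next_leaf_injection:
  assumes "ordered_tree S" "ordered_tree T" "is_injection_of T S f i" "leaf S x" "next_leaf S x x'"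
  obtains m b where "immsucc T m b" "tle T b (i x')" "meet T (i x) (i x') = m"
    "left_of_sibling T m b (i x)" "\<forall>y. i_conj S T i y x \<longleftrightarrow> last_leaf_left_of T m b y"
proof -
  interpret S: ordered_tree S by fact
  interpret T: ordered_tree T by fact
  obtain m a b where w: "immsucc T m a" "immsucc T m b" "a \<noteq> b" "sibl T a b"
    "tle T a (i x)" "tle T b (i x')"
    using injection_next_leaf_split[OF S.tree_axioms T.tree_axioms assms(3-5)]
    unfolding left_split_def by blast
  have "leaf S x'"
    using assms(5) by (simp add: next_leaf_def)
  then have N: "i x \<in> nodes T" "i x' \<in> nodes T"
    using injection_ofD(2)[OF assms(3)] S.leaf_in_nodes assms(4) by blast+
  have m: "meet T (i x) (i x') = m"
    using T.meet_distinct_immsucc(1)[OF w(1-3,5,6) N] .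
  have "left_of_sibling T m b (i x)"
    unfolding left_of_sibling_def using w by blast
  moreover have "\<forall>y. i_conj S T i y x \<longleftrightarrow> last_leaf_left_of T m b y"
    using i_conj_next_leaf_iff[where i = i, OF assms(1,2,4,5) N(2), unfolded m, OF w(2,6)] by simp
  ultimately show ?thesis
    by (rule that[OF w(2,6) m])
qed

lemma f_conj_exists:
  assumes "ordered_tree S" "ordered_tree T" "rigid_surj T S f" "leaf S x"
  shows "\<exists>y. f_conj T S f y x"
proof -
  interpret S: ordered_tree S by fact
  interpret T: ordered_tree T by fact
  define F where "F = injection T S f"
  have F: "is_injection_of T S f F"
    unfolding F_def using rigid_surj_injection[OF assms(3)] .
  have "\<exists>y. i_conj S T F y x"
  proof (cases "last_leaf S x")
    case True
    obtain y where "last_leaf T y"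
      using T.last_leaf_exists by blast
    then have "i_conj S T F y x"
      by (simp add: i_conj_last_leaf[OF True])
    then show ?thesis ..
  next
    case False
    obtain x' where x': "next_leaf S x x'"
      using S.next_leaf_exists[OF assms(4) False] by blast
    obtain m b where "immsucc T m b" "tle T b (F x')" "meet T (F x) (F x') = m"
      and left: "left_of_sibling T m b (F x)"
      and conj: "\<forall>y. i_conj S T F y x \<longleftrightarrow> last_leaf_left_of T m b y"
      by (rule i_conj_next_leaf_injection[OF assms(1,2) F assms(4) x'])
    have "F x \<in> nodes T"
      using injection_ofD(2)[OF F] S.leaf_in_nodes[OF assms(4)] .
    then obtain y where "last_leaf_left_of T m b y"
      by (rule T.last_leaf_left_of_exists[OF left])
    then have "i_conj S T F y x"
      using conj by simp
    then show ?thesis ..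
  qed
  then show ?thesis
    unfolding f_conj_def F_def .
qed

lemma i_conj_last_leaf_left_of:
  assumes "ordered_tree T" "ordered_tree V" "is_injection_of V T g G"
    and "last_leaf_left_of T m b y" "immsucc T m b"
  obtains c where "immsucc V (G m) c" "tle V c (G b)"
    "\<forall>z. i_conj T V G z y \<longleftrightarrow> last_leaf_left_of V (G m) c z"
proof -
  interpret T: ordered_tree T by fact
  interpret V: ordered_tree V by fact
  note G = injection_ofD[OF assms(3)]
  obtain y' where y': "next_leaf T y y'" "tle T b y'" "meet T y y' = m"
    using T.last_leaf_left_of_next[OF assms(4,5)] by blast
  have "leaf T y" "leaf T y'"
    using assms(4) y'(1) by (simp_all add: last_leaf_left_of_def next_leaf_def)
  then have yN: "y \<in> nodes T" "y' \<in> nodes T" "G y' \<in> nodes V"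
    using T.leaf_in_nodes G(2) by blast+
  have mb: "m \<in> nodes T" "b \<in> nodes T" "tlt T m b"
    using T.immsuccD[OF assms(5)] unfolding tlt_def by blast+
  then have "tlt V (G m) (G b)"
    using injection_of_tlt[OF T.tree_axioms V.tree_axioms assms(3)] by blast
  then obtain c where c: "immsucc V (G m) c" "tle V c (G b)"
    using V.immsucc_exists G(2) mb by blast
  have "tle V (G b) (G y')"
    using injection_of_tle[OF T.tree_axioms V.tree_axioms assms(3)] mb(2) yN(2) y'(2) by blast
  then have "tle V c (G y')"
    using V.tle_trans[OF _ G(2)[OF mb(2)] yN(3)] V.immsuccD[OF c(1)] c(2) by blast
  moreover have "meet V (G y) (G y') = G m"
    using G(4)[OF yN(1,2)] y'(3) by simp
  ultimately have "\<forall>z. i_conj T V G z y \<longleftrightarrow> last_leaf_left_of V (G m) c z"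
    using i_conj_next_leaf_iff[where i = G, OF assms(1,2) \<open>leaf T y\<close> y'(1) yN(3)] c(1) by simp
  then show ?thesis
    by (rule that[OF c])
qed

lemma i_conj_unique:
  assumes "ordered_tree S" "ordered_tree T" "leaf S x" "i_conj S T i y x" "i_conj S T i y' x"
  shows "y = y'"
proof (cases "last_leaf S x")
  case True
  then have "last_leaf T y" "last_leaf T y'"
    using assms(4,5) by (simp_all add: i_conj_last_leaf)
  then show ?thesis
    by (rule ordered_tree.last_leaf_unique[OF assms(2)])
next
  case False
  interpret S: ordered_tree S by fact
  interpret T: ordered_tree T by fact
  obtain x' where x': "next_leaf S x x'"
    using S.next_leaf_exists[OF assms(3) False] by blast
  have "lex T y y'" "lex T y' y" "y \<in> nodes T" "y' \<in> nodes T"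
    using assms(4,5) T.leaf_in_nodes unfolding i_conj_next_leaf[OF assms(1,3) x'] by blast+
  then show ?thesis
    using T.lex_antisym by blast
qed

lemma i_conj_cong:
  assumes "ordered_tree S" "leaf S x" "\<And>v. v \<in> nodes S \<Longrightarrow> i v = i' v"
  shows "i_conj S T i y x \<longleftrightarrow> i_conj S T i' y x"
proof (cases "last_leaf S x")
  case True
  then show ?thesis
    by (simp add: i_conj_last_leaf)
next
  case False
  interpret S: ordered_tree S by fact
  obtain x' where x': "next_leaf S x x'"
    using S.next_leaf_exists[OF assms(2) False] by blast
  have "i x = i' x" "i x' = i' x'"
    using assms(2,3) x' S.leaf_in_nodes unfolding next_leaf_def by blast+
  then show ?thesis
    unfolding i_conj_next_leaf[OF assms(1,2) x'] by simp
qed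

lemma last_leaf_left_of_pullback:
  assumes "ordered_tree T" "ordered_tree V" "is_injection_of V T g G"
    and "last_leaf_left_of T m b y" "immsucc T m b"
    and "last_leaf_left_of V (G m) c z" "immsucc V (G m) c" "tle V c (G b)"
    and "w \<in> nodes V" "g w \<in> nodes T" "lex V w z"
  shows "lex T (g w) y"
proof (rule ccontr)
  interpret T: ordered_tree T by fact
  interpret V: ordered_tree V by fact
  note G = injection_ofD[OF assms(3)]
  have b: "b \<in> nodes T" "G b \<in> nodes V"
    using T.immsuccD[OF assms(5)] G(2) by blast+
  have z: "leaf V z" "z \<in> nodes V" "left_of_sibling V (G m) c z"
    using assms(6) V.leaf_in_nodes unfolding last_leaf_left_of_def by blast+
  assume "\<not> lex T (g w) y"
  then have "lex T b (g w)"
    using T.lex_after_last_leaf_left_of[OF assms(4,5,10)] by blast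
  then have "lex V (G b) (G (g w))"
    using G(5) b(1) assms(10) by blast
  moreover have "lex V (G (g w)) w"
    using G(6) assms(9) V.tle_imp_lex by blast
  ultimately have "lex V (G b) z"
    using V.lex_trans[OF b(2) G(2)[OF assms(10)] assms(9)] V.lex_trans[OF b(2) assms(9) z(2)] assms(11)
    by blast
  moreover have "lexlt V z (G b)"
    using V.left_of_sibling_iff[OF z(1) b(2) assms(7,8)] z(3) by blast
  ultimately show False
    using V.lex_antisym[OF z(2) b(2)] unfolding lexlt_def by blast
qed

lemma i_conj_comp:
  assumes "ordered_tree S" "ordered_tree T" "ordered_tree V"
    and "is_injection_of T S f F" "is_injection_of V T g G" "\<And>w. w \<in> nodes V \<Longrightarrow> g w \<in> nodes T"
    and "leaf S x" "i_conj S T F y x" "i_conj T V G z y"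
  shows "i_conj S V (G \<circ> F) z x \<and> (\<forall>w\<in>nodes V. lex V w z \<longrightarrow> lex T (g w) y)"
proof (cases "last_leaf S x")
  case True
  then have "last_leaf T y" "last_leaf V z"
    using assms(8,9) by (simp_all add: i_conj_last_leaf)
  then show ?thesis
    using ordered_tree.lex_last_leaf[OF assms(2)] assms(6) by (simp add: i_conj_last_leaf[OF True])
next
  case False
  interpret S: ordered_tree S by fact
  interpret T: ordered_tree T by fact
  interpret V: ordered_tree V by fact
  note F = injection_ofD[OF assms(4)] and G = injection_ofD[OF assms(5)]
  obtain x' where x': "next_leaf S x x'"
    using S.next_leaf_exists[OF assms(7) False] by blast
  obtain m b where mb: "immsucc T m b" "tle T b (F x')" "meet T (F x) (F x') = m"
    "left_of_sibling T m b (F x)" and conj_y: "\<forall>y. i_conj S T F y x \<longleftrightarrow> last_leaf_left_of T m b y"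
    by (rule i_conj_next_leaf_injection[OF assms(1,2,4,7) x'])
  have y: "last_leaf_left_of T m b y"
    using assms(8) conj_y by simp
  obtain c where c: "immsucc V (G m) c" "tle V c (G b)"
    and conj_z: "\<forall>z. i_conj T V G z y \<longleftrightarrow> last_leaf_left_of V (G m) c z"
    by (rule i_conj_last_leaf_left_of[OF assms(2,3,5) y mb(1)])
  have z: "last_leaf_left_of V (G m) c z"
    using assms(9) conj_z by simp
  have "leaf S x'"
    using x' by (simp add: next_leaf_def)
  then have N: "F x \<in> nodes T" "F x' \<in> nodes T" "b \<in> nodes T"
    using F(2) S.leaf_in_nodes assms(7) T.immsuccD[OF mb(1)] by blast+
  have "tle V c (G (F x'))"
    using injection_of_tle[OF T.tree_axioms V.tree_axioms assms(5) N(3,2) mb(2)]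
      V.tle_trans[OF _ G(2)[OF N(3)] G(2)[OF N(2)]] V.immsuccD[OF c(1)] c(2) by blast
  moreover have "meet V ((G \<circ> F) x) ((G \<circ> F) x') = G m"
    using G(4)[OF N(1,2)] mb(3) by simp
  ultimately have "i_conj S V (G \<circ> F) z x"
    using i_conj_next_leaf_iff[where i = "G \<circ> F", OF assms(1,3,7) x'] G(2)[OF N(2)] c(1) z by simp
  moreover have "lex T (g w) y" if "w \<in> nodes V" "lex V w z" for w
    using last_leaf_left_of_pullback[OF assms(2,3,5) y mb(1) z c] that assms(6) by blast
  ultimately show ?thesis by blast
qed

lemma f_conj_comp:
  assumes "ordered_tree S" "ordered_tree T" "ordered_tree V"
    and "rigid_surj V T g" "rigid_surj T S f"
    and "leaf S x" "f_conj T S f y x" "f_conj V T g z y"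
  shows "f_conj V S (f \<circ> g) z x" "\<And>w. \<lbrakk>w \<in> nodes V; lex V w z\<rbrakk> \<Longrightarrow> lex T (g w) y"
proof -
  have trees: "tree T" "tree V"
    using ordered_tree.axioms(1)[OF assms(2)] ordered_tree.axioms(1)[OF assms(3)] .
  have gN: "\<And>w. w \<in> nodes V \<Longrightarrow> g w \<in> nodes T"
    using assms(4) unfolding rigid_surj_def by blast
  note comp = i_conj_comp[OF assms(1-3) rigid_surj_injection[OF assms(5)]
      rigid_surj_injection[OF assms(4)] gN assms(6) assms(7,8)[unfolded f_conj_def]]
  show "f_conj V S (f \<circ> g) z x"
    unfolding f_conj_def
    by (rule i_conj_cong[OF assms(1,6), THEN iffD2, OF _ comp[THEN conjunct1]])
      (simp add: rigid_surj_comp(2)[OF trees assms(4,5)])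
  show "\<And>w. \<lbrakk>w \<in> nodes V; lex V w z\<rbrakk> \<Longrightarrow> lex T (g w) y"
    using comp by blast
qed

theorem lemma4p15:
  fixes S :: "'a otree" and T :: "'b otree" and V :: "'c otree"
    and f :: "'b \<Rightarrow> 'a" and g :: "'c \<Rightarrow> 'b" and x :: 'a and y :: 'b
  assumes "is_otree S" and "is_otree T" and "is_otree V"
    and "rigid_surj V T g" and "rigid_surj T S f"
    and "leaf S x" and "f_conj T S f y x"
  shows "(\<exists>z. f_conj V T g z y) \<and> (\<exists>z'. f_conj V S (f \<circ> g) z' x) \<and>
    (\<forall>z z'. f_conj V T g z y \<longrightarrow> f_conj V S (f \<circ> g) z' x \<longrightarrow>
       down V z = down V z' \<and> g ` down V z \<subseteq> down T y \<and>
       (\<forall>w\<in>down V z. f (g w) = (f \<circ> g) w))"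
proof (intro conjI allI impI)
  have S: "ordered_tree S" and T: "ordered_tree T" and V: "ordered_tree V"
    using ordered_treeI assms(1-3) by blast+
  have "leaf T y"
    using assms(7) unfolding f_conj_def i_conj_def by blast
  then show "\<exists>z. f_conj V T g z y"
    using f_conj_exists[OF T V assms(4)] by blast
  show "\<exists>z'. f_conj V S (f \<circ> g) z' x"
    using f_conj_exists[OF S V rigid_surj_comp(1)[OF T [THEN ordered_tree.axioms(1)] V [THEN ordered_tree.axioms(1)] assms(4,5)]
        assms(6)] .
  fix z z' assume z: "f_conj V T g z y" and z': "f_conj V S (f \<circ> g) z' x"
  note comp = f_conj_comp[OF S T V assms(4-7) z]
  have "z = z'"
    using i_conj_unique[OF S V assms(6)] comp(1) z' unfolding f_conj_def by blast
  then show "down V z = down V z'" by simp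
  show "g ` down V z \<subseteq> down T y"
    using comp(2) assms(4) unfolding down_def rigid_surj_def by blast
  show "\<forall>w\<in>down V z. f (g w) = (f \<circ> g) w" by simp
qed

end
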